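(* Let $m,n\ge 1$ and $k\ge 2$ be integers. The linear map $\psi_{m,k}:V_{m,k}\to\mathbb{R}^N$ is an isomorphism of real vector spaces.
   Context: $mB^n=\{0,1,\ldots,m\}^n$. For an integer $k\ge 2$, a polynomial $P\in\mathbb{R}[x_1,\ldots,x_n]$ is called $(m,k)$-reduced if two conditions hold: $\deg P\le mn+(m+1)(k-1)-1$, and no monomial of $P$ is divisible by $x_{i_1}^{m+1}\cdots x_{i_k}^{m+1}$ for any indices $i_1,\ldots,i_k$ (not necessarily distinct). $V_{m,k}$ is the space of all $(m,k)$-reduced polynomials. $M_k(n)=\binom{n+k-1}{n}$ and $N=\big((m+1)^n-1\big)M_k(n)+M_{k-1}(n)$. The map $\psi_{m,k}$ sends $P\in V_{m,k}$ to the $N$-tuple listing, in a fixed order, two groups of values: - the values at every point of $mB^n\setminus\{\mathbf 0\}$ of all partial derivatives $\partial^{j_1+\cdots+j_n}P/\partial x_1^{j_1}\cdots\partial x_n^{j_n}$ with $j_1+\cdots+j_n<k$; - the values at $\mathbf 0$ of all such partial derivatives with $j_1+\cdots+j_n<k-1$. *)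

theory Defs
  imports Complex_Main
begin

text \<open>Multivariate real polynomials in x_0..x_(n-1) are represented by their coefficient
  functions c :: (nat => nat) => real, indexed by exponent vectors alpha (alpha i = 0 for i >= n).\<close>

definition expset :: "nat \<Rightarrow> nat \<Rightarrow> (nat \<Rightarrow> nat) set" where
  "expset n D = {\<alpha>. (\<forall>i\<ge>n. \<alpha> i = 0) \<and> (\<Sum>i<n. \<alpha> i) \<le> D}"

text \<open>x_(i1)^(m+1) ... x_(ik)^(m+1) divides the monomial x^alpha, where t i counts how often
  index i occurs among i1..ik.\<close>
definition mono_divisible :: "nat \<Rightarrow> nat \<Rightarrow> nat \<Rightarrow> (nat \<Rightarrow> nat) \<Rightarrow> bool" where
  "mono_divisible n m k \<alpha> =
     (\<exists>t::nat \<Rightarrow> nat. (\<Sum>i<n. t i) = k \<and> (\<forall>i<n. (m + 1) * t i \<le> \<alpha> i))"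

definition deg_bound :: "nat \<Rightarrow> nat \<Rightarrow> nat \<Rightarrow> nat" where
  "deg_bound n m k = m * n + (m + 1) * (k - 1) - 1"

definition reduced_space :: "nat \<Rightarrow> nat \<Rightarrow> nat \<Rightarrow> ((nat \<Rightarrow> nat) \<Rightarrow> real) set" where
  "reduced_space n m k =
     {c. \<forall>\<alpha>. c \<alpha> \<noteq> 0 \<longrightarrow> \<alpha> \<in> expset n (deg_bound n m k) \<and> \<not> mono_divisible n m k \<alpha>}"

text \<open>Value at x of the partial derivative d^|j| P / dx_0^(j 0) ... dx_(n-1)^(j (n-1)),
  for P with coefficients c supported in expset n D.\<close>
definition deriv_at :: "nat \<Rightarrow> nat \<Rightarrow> ((nat \<Rightarrow> nat) \<Rightarrow> real) \<Rightarrow> (nat \<Rightarrow> nat) \<Rightarrow> (nat \<Rightarrow> real) \<Rightarrow> real" where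
  "deriv_at n D c j x =
     (\<Sum>\<alpha>\<in>expset n D. c \<alpha> * (\<Prod>i<n. real (\<Prod>t<j i. \<alpha> i - t) * x i ^ (\<alpha> i - j i)))"

definition grid_pts :: "nat \<Rightarrow> nat \<Rightarrow> (nat \<Rightarrow> nat) set" where
  "grid_pts n m = {x. (\<forall>i<n. x i \<le> m) \<and> (\<forall>i\<ge>n. x i = 0)}"

definition midx :: "nat \<Rightarrow> nat \<Rightarrow> (nat \<Rightarrow> nat) set" where
  "midx n d = {j. (\<forall>i\<ge>n. j i = 0) \<and> (\<Sum>i<n. j i) < d}"

definition psi_index :: "nat \<Rightarrow> nat \<Rightarrow> nat \<Rightarrow> ((nat \<Rightarrow> nat) \<times> (nat \<Rightarrow> nat)) set" where
  "psi_index n m k =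
     {(x, j). x \<in> grid_pts n m - {(\<lambda>_. 0)} \<and> j \<in> midx n k}
     \<union> {(x, j). x = (\<lambda>_. 0) \<and> j \<in> midx n (k - 1)}"

text \<open>psi_{m,k}: the tuple is a function on psi_index (extended by 0 outside).\<close>
definition psi :: "nat \<Rightarrow> nat \<Rightarrow> nat \<Rightarrow> ((nat \<Rightarrow> nat) \<Rightarrow> real) \<Rightarrow> ((nat \<Rightarrow> nat) \<times> (nat \<Rightarrow> nat)) \<Rightarrow> real" where
  "psi n m k c = (\<lambda>(x, j). if (x, j) \<in> psi_index n m k
       then deriv_at n (deg_bound n m k) c j (\<lambda>i. real (x i)) else 0)"

definition Mk :: "nat \<Rightarrow> nat \<Rightarrow> nat" where
  "Mk k n = (n + k - 1) choose n"

definition bigN :: "nat \<Rightarrow> nat \<Rightarrow> nat \<Rightarrow> nat" where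
  "bigN n m k = ((m + 1) ^ n - 1) * Mk k n + Mk (k - 1) n"

end

theory Submission
  imports Defs "HOL-Computational_Algebra.Polynomial" "HOL-Library.Function_Algebras"
    "HOL-Library.FuncSet" "HOL-Library.Indicator_Function"
begin

text \<open>
  Let g(t) = t (t - 1) ... (t - m) and l_c(t) = g(t) / (t - c) (node_poly and lagrange_poly).
  For a grid point c and a multi-index q put E_(q,c)(x) = prod_i g(x_i)^(q_i) l_(c_i)(x_i)
  (hermite_tensor). Among the coordinates (b, j) of psi with |j| <= |q|, the only nonzero one
  of E_(q,c) is (c, q). If |q| <= k - 2 then E_(q,c) is (m,k)-reduced; if |q| = k - 1 then
  E_(q,c) - E_(q,0) is reduced, and (0, q) is not a coordinate of psi. Hence, by downward
  induction on |j|, every unit vector of R^N lies in the image of psi. Conversely, writing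
  alpha_i = (m + 1) j_i + r_i sends the reduced monomials x^alpha injectively to the
  coordinates (m - r, j), so dim V_(m,k) <= N and psi is injective too.
\<close>

section \<open>Univariate Hermite-type interpolation polynomials\<close>

lemma poly_eq_sum_atMost:
  fixes p :: "'a::comm_semiring_1 poly"
  assumes "degree p \<le> N"
  shows "poly p y = (\<Sum>a\<le>N. coeff p a * y ^ a)"
proof -
  have "poly p y = (\<Sum>a\<le>degree p. coeff p a * y ^ a)" by (rule poly_altdef)
  also have "\<dots> = (\<Sum>a\<le>N. coeff p a * y ^ a)"
    by (rule sum.mono_neutral_left) (use assms in \<open>auto simp: coeff_eq_0\<close>)
  finally show ?thesis .
qed

lemma poly_funpow_pderiv:
  fixes p :: "'a::{comm_semiring_1,semiring_no_zero_divisors,semiring_char_0} poly"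
  assumes "degree p \<le> N"
  shows "poly ((pderiv ^^ j) p) y = (\<Sum>a\<le>N. coeff p a * (of_nat (\<Prod>t<j. a - t) * y ^ (a - j)))"
  using assms
proof (induction j arbitrary: p N)
  case 0
  then show ?case by (simp add: poly_eq_sum_atMost)
next
  case (Suc j)
  have falling_Suc: "(\<Prod>t<Suc j. Suc a - t) = Suc a * (\<Prod>t<j. a - t)" for a
    by (subst prod.lessThan_Suc_shift) simp
  have falling_0: "(\<Prod>t<Suc j. (0::nat) - t) = 0"
    by (subst prod.lessThan_Suc_shift) simp
  have "poly ((pderiv ^^ Suc j) p) y = poly ((pderiv ^^ j) (pderiv p)) y"
    by (simp add: funpow_Suc_right del: funpow.simps)
  also have "\<dots> = (\<Sum>a\<le>N. coeff (pderiv p) a * (of_nat (\<Prod>t<j. a - t) * y ^ (a - j)))"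
    by (rule Suc.IH) (use Suc.prems in \<open>simp add: degree_pderiv\<close>)
  also have "\<dots> = (\<Sum>a\<le>N. coeff p (Suc a) * (of_nat (\<Prod>t<Suc j. Suc a - t) * y ^ (Suc a - Suc j)))"
    by (intro sum.cong refl)
      (simp add: coeff_pderiv falling_Suc algebra_simps del: prod.lessThan_Suc of_nat_prod)
  also have "\<dots> = (\<Sum>a\<le>Suc N. coeff p a * (of_nat (\<Prod>t<Suc j. a - t) * y ^ (a - Suc j)))"
    by (subst sum.atMost_Suc_shift) (simp add: falling_0 del: prod.lessThan_Suc)
  also have "\<dots> = (\<Sum>a\<le>N. coeff p a * (of_nat (\<Prod>t<Suc j. a - t) * y ^ (a - Suc j)))"
    using Suc.prems by (simp add: coeff_eq_0 del: prod.lessThan_Suc)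
  finally show ?case .
qed

lemma poly_funpow_pderiv_linear_power_mult:
  fixes f :: "'a::{idom,ring_char_0} poly"
  assumes "j \<le> q"
  shows "poly ((pderiv ^^ j) ([:- a, 1:] ^ q * f)) a = (if j = q then fact q * poly f a else 0)"
  using assms
proof (induction q arbitrary: j f)
  case 0
  then show ?case by simp
next
  case (Suc q)
  show ?case
  proof (cases j)
    case 0
    then show ?thesis by simp
  next
    case (Suc j')
    have "pderiv ([:- a, 1:] ^ Suc q * f) =
        [:- a, 1:] ^ q * (smult (of_nat (Suc q)) f + [:- a, 1:] * pderiv f)"
      unfolding pderiv_mult pderiv_power_Suc
      by (simp add: pderiv_pCons algebra_simps smult_add_right)
    then have "poly ((pderiv ^^ j) ([:- a, 1:] ^ Suc q * f)) a =
        poly ((pderiv ^^ j') ([:- a, 1:] ^ q * (smult (of_nat (Suc q)) f + [:- a, 1:] * pderiv f))) a"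
      using Suc by (simp add: funpow_Suc_right del: funpow.simps)
    also have "\<dots> = (if j' = q then fact q * (of_nat (Suc q) * poly f a) else 0)"
      using Suc.IH[of j'] Suc.prems \<open>j = Suc j'\<close> by simp
    finally show ?thesis
      using \<open>j = Suc j'\<close> by (simp add: algebra_simps)
  qed
qed

definition node_poly :: "nat \<Rightarrow> real poly" where
  "node_poly m = (\<Prod>t\<le>m. [:- real t, 1:])"

definition lagrange_poly :: "nat \<Rightarrow> nat \<Rightarrow> real poly" where
  "lagrange_poly m c = (\<Prod>t\<in>{..m} - {c}. [:- real t, 1:])"

definition hermite_poly :: "nat \<Rightarrow> nat \<Rightarrow> nat \<Rightarrow> real poly" where
  "hermite_poly m q c = node_poly m ^ q * lagrange_poly m c"

lemma node_poly_eq: "b \<le> m \<Longrightarrow> node_poly m = [:- real b, 1:] * lagrange_poly m b"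
  unfolding node_poly_def lagrange_poly_def by (subst prod.remove[of _ b]) auto

lemma poly_lagrange_poly_eq_0: "b \<le> m \<Longrightarrow> b \<noteq> c \<Longrightarrow> poly (lagrange_poly m c) (real b) = 0"
  unfolding lagrange_poly_def poly_prod by (rule prod_zero) (auto intro!: bexI[of _ b])

lemma poly_lagrange_poly_self_neq_0: "poly (lagrange_poly m b) (real b) \<noteq> 0"
  unfolding lagrange_poly_def poly_prod by (subst prod_zero_iff) auto

lemma degree_hermite_poly: "c \<le> m \<Longrightarrow> degree (hermite_poly m q c) = Suc m * q + m"
  unfolding hermite_poly_def node_poly_def lagrange_poly_def
  by (subst degree_mult_eq; simp add: degree_power_eq degree_prod_eq_sum_degree)

lemma lead_coeff_hermite_poly: "lead_coeff (hermite_poly m q c) = 1"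
  unfolding hermite_poly_def node_poly_def lagrange_poly_def
  by (simp add: lead_coeff_mult lead_coeff_power lead_coeff_prod)

lemma coeff_hermite_poly_top: "c \<le> m \<Longrightarrow> coeff (hermite_poly m q c) (Suc m * q + m) = 1"
  using lead_coeff_hermite_poly[of m q c] degree_hermite_poly[of c m q] by simp

lemma poly_funpow_pderiv_hermite_poly:
  assumes "b \<le> m" "c \<le> m" "j \<le> q"
  shows "poly ((pderiv ^^ j) (hermite_poly m q c)) (real b) =
    (if j = q \<and> b = c then fact q * poly (lagrange_poly m b) (real b) ^ Suc q else 0)"
proof -
  have "hermite_poly m q c = [:- real b, 1:] ^ q * (lagrange_poly m b ^ q * lagrange_poly m c)"
    unfolding hermite_poly_def node_poly_eq[OF assms(1)] by (simp only: power_mult_distrib mult_ac)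
  then show ?thesis
    using assms by (simp add: poly_funpow_pderiv_linear_power_mult poly_lagrange_poly_eq_0)
qed

section \<open>Tensor products of univariate polynomials\<close>

definition coord_box :: "nat \<Rightarrow> (nat \<Rightarrow> nat set) \<Rightarrow> (nat \<Rightarrow> nat) set" where
  "coord_box n B = {\<alpha>. (\<forall>i\<ge>n. \<alpha> i = 0) \<and> (\<forall>i<n. \<alpha> i \<in> B i)}"

lemma bij_betw_restrict_coord_box:
  "bij_betw (\<lambda>\<alpha>. restrict \<alpha> {..<n}) (coord_box n B) (PiE {..<n} B)"
proof (rule bij_betwI[where g = "\<lambda>g i. if i < n then g i else 0"])
  show "(\<lambda>\<alpha>. restrict \<alpha> {..<n}) \<in> coord_box n B \<rightarrow> PiE {..<n} B"
    by (auto simp: coord_box_def)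
  show "(\<lambda>g i. if i < n then g i else 0) \<in> PiE {..<n} B \<rightarrow> coord_box n B"
    by (auto simp: coord_box_def PiE_def Pi_def)
  show "(\<lambda>i. if i < n then restrict \<alpha> {..<n} i else 0) = \<alpha>" if "\<alpha> \<in> coord_box n B" for \<alpha>
    using that by (auto simp: coord_box_def fun_eq_iff)
  show "restrict (\<lambda>i. if i < n then g i else 0) {..<n} = g" if "g \<in> PiE {..<n} B" for g
    using that by (auto simp: PiE_def extensional_def fun_eq_iff)
qed

lemma finite_coord_box: "(\<And>i. i < n \<Longrightarrow> finite (B i)) \<Longrightarrow> finite (coord_box n B)"
  using bij_betw_finite[OF bij_betw_restrict_coord_box] finite_PiE[of "{..<n}" B] by simp

lemma card_coord_box:
  "(\<And>i. i < n \<Longrightarrow> finite (B i)) \<Longrightarrow> card (coord_box n B) = (\<Prod>i<n. card (B i))"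
  using bij_betw_same_card[OF bij_betw_restrict_coord_box] by (simp add: card_PiE)

lemma sum_prod_coord_box:
  fixes h :: "nat \<Rightarrow> nat \<Rightarrow> 'a::comm_semiring_1"
  assumes "\<And>i. i < n \<Longrightarrow> finite (B i)"
  shows "(\<Sum>\<alpha>\<in>coord_box n B. \<Prod>i<n. h i (\<alpha> i)) = (\<Prod>i<n. \<Sum>a\<in>B i. h i a)"
proof -
  have "(\<Prod>i<n. \<Sum>a\<in>B i. h i a) = (\<Sum>g\<in>PiE {..<n} B. \<Prod>i<n. h i (g i))"
    by (rule prod_sum_PiE) (use assms in auto)
  also have "\<dots> = (\<Sum>\<alpha>\<in>coord_box n B. \<Prod>i<n. h i (restrict \<alpha> {..<n} i))"
    by (rule sum.reindex_bij_betw[OF bij_betw_restrict_coord_box, symmetric])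
  finally show ?thesis by simp
qed

lemma expset_subset_coord_box: "expset n D \<subseteq> coord_box n (\<lambda>_. {..D})"
proof
  fix \<alpha> assume "\<alpha> \<in> expset n D"
  moreover have "\<alpha> i \<le> (\<Sum>i<n. \<alpha> i)" if "i < n" for i
    by (rule member_le_sum) (use that in auto)
  ultimately show "\<alpha> \<in> coord_box n (\<lambda>_. {..D})"
    by (force simp: expset_def coord_box_def)
qed

lemma finite_expset: "finite (expset n D)"
  by (rule finite_subset[OF expset_subset_coord_box finite_coord_box]) auto

lemma expset_mono: "D \<le> D' \<Longrightarrow> expset n D \<subseteq> expset n D'"
  by (auto simp: expset_def)

lemma grid_pts_eq_coord_box: "grid_pts n m = coord_box n (\<lambda>_. {..m})"
  by (auto simp: grid_pts_def coord_box_def)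

lemma zero_in_grid_pts: "(\<lambda>_. 0) \<in> grid_pts n m"
  by (simp add: grid_pts_def)

lemma midx_subset_coord_box: "midx n d \<subseteq> coord_box n (\<lambda>_. {..d})"
proof
  fix j assume "j \<in> midx n d"
  moreover have "j i \<le> (\<Sum>i<n. j i)" if "i < n" for i
    by (rule member_le_sum) (use that in auto)
  ultimately show "j \<in> coord_box n (\<lambda>_. {..d})"
    by (force simp: midx_def coord_box_def)
qed

lemma finite_midx: "finite (midx n d)"
  by (rule finite_subset[OF midx_subset_coord_box finite_coord_box]) auto

lemma deriv_at_eq_if_support:
  assumes "\<And>\<alpha>. c \<alpha> \<noteq> 0 \<Longrightarrow> \<alpha> \<in> expset n D" "D \<le> D'"
  shows "deriv_at n D c j x = deriv_at n D' c j x"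
  unfolding deriv_at_def
  by (rule sum.mono_neutral_left) (use assms finite_expset expset_mono in auto)

lemma deriv_at_linear_combination:
  "deriv_at n D (\<lambda>\<alpha>. a * c \<alpha> + b * d \<alpha>) j x = a * deriv_at n D c j x + b * deriv_at n D d j x"
  unfolding deriv_at_def by (simp add: sum.distrib sum_distrib_left algebra_simps)

lemma deriv_at_diff:
  "deriv_at n D (\<lambda>\<alpha>. c \<alpha> - d \<alpha>) j x = deriv_at n D c j x - deriv_at n D d j x"
  unfolding deriv_at_def by (simp add: sum_subtractf algebra_simps)

text \<open>The coefficients of the product f_0(x_0) ... f_(n-1)(x_(n-1)).\<close>
definition tensor_coeffs :: "nat \<Rightarrow> (nat \<Rightarrow> real poly) \<Rightarrow> (nat \<Rightarrow> nat) \<Rightarrow> real" where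
  "tensor_coeffs n f \<alpha> = (if \<forall>i\<ge>n. \<alpha> i = 0 then \<Prod>i<n. coeff (f i) (\<alpha> i) else 0)"

lemma tensor_coeffs_neq_0D:
  "tensor_coeffs n f \<alpha> \<noteq> 0 \<Longrightarrow> (\<forall>i\<ge>n. \<alpha> i = 0) \<and> (\<forall>i<n. coeff (f i) (\<alpha> i) \<noteq> 0)"
  unfolding tensor_coeffs_def by (auto split: if_splits)

lemma deriv_at_tensor_coeffs:
  assumes "\<And>\<alpha>. tensor_coeffs n f \<alpha> \<noteq> 0 \<Longrightarrow> \<alpha> \<in> expset n D"
  shows "deriv_at n D (tensor_coeffs n f) j x = (\<Prod>i<n. poly ((pderiv ^^ j i) (f i)) (x i))"
proof -
  let ?B = "coord_box n (\<lambda>i. {..degree (f i)})"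
  let ?term = "\<lambda>i a. coeff (f i) a * (real (\<Prod>t<j i. a - t) * x i ^ (a - j i))"
  have support: "tensor_coeffs n f \<alpha> \<noteq> 0 \<Longrightarrow> \<alpha> \<in> ?B" for \<alpha>
    using tensor_coeffs_neq_0D[of n f \<alpha>] by (auto simp: coord_box_def le_degree)
  have box_subset: "?B \<subseteq> expset n (\<Sum>i<n. degree (f i))"
    by (auto simp: coord_box_def expset_def intro!: sum_mono)
  have "deriv_at n D (tensor_coeffs n f) j x =
      deriv_at n (D + (\<Sum>i<n. degree (f i))) (tensor_coeffs n f) j x"
    by (rule deriv_at_eq_if_support) (use assms in auto)
  also have "\<dots> = (\<Sum>\<alpha>\<in>?B. tensor_coeffs n f \<alpha> * (\<Prod>i<n. real (\<Prod>t<j i. \<alpha> i - t) * x i ^ (\<alpha> i - j i)))"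
    unfolding deriv_at_def
  proof (rule sum.mono_neutral_right)
    show "?B \<subseteq> expset n (D + (\<Sum>i<n. degree (f i)))"
      using box_subset expset_mono[of "\<Sum>i<n. degree (f i)" "D + (\<Sum>i<n. degree (f i))" n] by auto
  qed (use support in \<open>auto simp: finite_expset\<close>)
  also have "\<dots> = (\<Sum>\<alpha>\<in>?B. \<Prod>i<n. ?term i (\<alpha> i))"
    by (intro sum.cong refl) (auto simp: tensor_coeffs_def coord_box_def prod.distrib)
  also have "\<dots> = (\<Prod>i<n. \<Sum>a\<le>degree (f i). ?term i a)"
    by (rule sum_prod_coord_box) auto
  also have "\<dots> = (\<Prod>i<n. poly ((pderiv ^^ j i) (f i)) (x i))"
    by (intro prod.cong refl) (rule poly_funpow_pderiv[symmetric], simp)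
  finally show ?thesis .
qed

definition hermite_tensor :: "nat \<Rightarrow> nat \<Rightarrow> (nat \<Rightarrow> nat) \<Rightarrow> (nat \<Rightarrow> nat) \<Rightarrow> (nat \<Rightarrow> nat) \<Rightarrow> real" where
  "hermite_tensor n m q c = tensor_coeffs n (\<lambda>i. hermite_poly m (q i) (c i))"

definition hermite_weight :: "nat \<Rightarrow> nat \<Rightarrow> (nat \<Rightarrow> nat) \<Rightarrow> (nat \<Rightarrow> nat) \<Rightarrow> real" where
  "hermite_weight n m q b =
     (\<Prod>i<n. fact (q i) * poly (lagrange_poly m (b i)) (real (b i)) ^ Suc (q i))"

lemma hermite_weight_neq_0: "hermite_weight n m q b \<noteq> 0"
  unfolding hermite_weight_def using poly_lagrange_poly_self_neq_0 by (subst prod_zero_iff) auto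

lemma hermite_tensor_neq_0D:
  assumes "c \<in> grid_pts n m" "hermite_tensor n m q c \<alpha> \<noteq> 0"
  shows "(\<forall>i\<ge>n. \<alpha> i = 0) \<and> (\<forall>i<n. \<alpha> i \<le> Suc m * q i + m)"
  using tensor_coeffs_neq_0D[OF assms(2)[unfolded hermite_tensor_def]] assms(1)
    le_degree degree_hermite_poly
  by (fastforce simp: grid_pts_def)

lemma hermite_tensor_in_expset:
  assumes "c \<in> grid_pts n m" "hermite_tensor n m q c \<alpha> \<noteq> 0"
  shows "\<alpha> \<in> expset n (Suc m * (\<Sum>i<n. q i) + m * n)"
proof -
  note bounds = hermite_tensor_neq_0D[OF assms]
  have "(\<Sum>i<n. \<alpha> i) \<le> (\<Sum>i<n. Suc m * q i + m)"
    by (rule sum_mono) (use bounds in auto)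
  also have "\<dots> = Suc m * (\<Sum>i<n. q i) + m * n"
    by (simp add: sum.distrib sum_distrib_left)
  finally show ?thesis using bounds by (auto simp: expset_def)
qed

lemma hermite_tensor_top_coeff:
  assumes "c \<in> grid_pts n m" "\<forall>i<n. \<alpha> i = Suc m * q i + m" "\<forall>i\<ge>n. \<alpha> i = 0"
  shows "hermite_tensor n m q c \<alpha> = 1"
  using assms coeff_hermite_poly_top
  by (auto simp: hermite_tensor_def tensor_coeffs_def grid_pts_def)

lemma exists_less_if_sum_le:
  fixes j q :: "nat \<Rightarrow> nat"
  assumes "\<forall>i\<ge>n. j i = 0" "\<forall>i\<ge>n. q i = 0" "(\<Sum>i<n. j i) \<le> (\<Sum>i<n. q i)" "j \<noteq> q"
  shows "\<exists>i<n. j i < q i"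
proof (rule ccontr)
  assume "\<not> ?thesis"
  then have ge: "\<forall>i<n. q i \<le> j i" by auto
  obtain i where i: "j i \<noteq> q i" using assms(4) by auto
  then have "i < n" using assms(1,2) by (cases "i < n") auto
  then have "q i < j i" using ge i by (simp add: le_neq_implies_less)
  then have "(\<Sum>i<n. q i) < (\<Sum>i<n. j i)"
    using ge \<open>i < n\<close> by (intro sum_strict_mono_ex1) auto
  then show False using assms(3) by simp
qed

lemma deriv_at_hermite_tensor:
  assumes b: "b \<in> grid_pts n m" and c: "c \<in> grid_pts n m"
    and "\<forall>i\<ge>n. j i = 0" "\<forall>i\<ge>n. q i = 0" "(\<Sum>i<n. j i) \<le> (\<Sum>i<n. q i)"
    and D: "Suc m * (\<Sum>i<n. q i) + m * n \<le> D"
  shows "deriv_at n D (hermite_tensor n m q c) j (\<lambda>i. real (b i)) =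
    (if j = q \<and> b = c then hermite_weight n m q b else 0)"
proof -
  have "deriv_at n D (hermite_tensor n m q c) j (\<lambda>i. real (b i)) =
      (\<Prod>i<n. poly ((pderiv ^^ j i) (hermite_poly m (q i) (c i))) (real (b i)))"
    unfolding hermite_tensor_def
    by (rule deriv_at_tensor_coeffs)
      (use hermite_tensor_in_expset[OF c] expset_mono[OF D] in \<open>auto simp: hermite_tensor_def\<close>)
  also have "\<dots> = (if j = q \<and> b = c then hermite_weight n m q b else 0)"
  proof (cases "j = q")
    case True
    have "b = c \<longleftrightarrow> (\<forall>i<n. b i = c i)"
      using b c by (auto simp: grid_pts_def fun_eq_iff) (metis not_le)
    then show ?thesis
      using True b c by (auto simp: grid_pts_def poly_funpow_pderiv_hermite_poly hermite_weight_def)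
  next
    case False
    then obtain i where "i < n" "j i < q i"
      using exists_less_if_sum_le assms by blast
    then show ?thesis
      using False b c by (auto intro!: prod_zero bexI[of _ i] simp: grid_pts_def poly_funpow_pderiv_hermite_poly)
  qed
  finally show ?thesis .
qed

lemma not_mono_divisible_if_le:
  assumes "\<forall>i<n. \<alpha> i \<le> Suc m * q i + m" "(\<Sum>i<n. q i) < k"
  shows "\<not> mono_divisible n m k \<alpha>"
proof
  assume "mono_divisible n m k \<alpha>"
  then obtain t where t: "(\<Sum>i<n. t i) = k" "\<forall>i<n. (m + 1) * t i \<le> \<alpha> i"
    by (auto simp: mono_divisible_def)
  have "t i \<le> q i" if "i < n" for i
  proof -
    have "Suc m * t i < Suc m * Suc (q i)"
      using t(2) assms(1) that by (fastforce intro: le_less_trans)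
    then have "t i < Suc (q i)" by (subst (asm) mult_less_cancel1) simp
    then show ?thesis by simp
  qed
  then have "(\<Sum>i<n. t i) \<le> (\<Sum>i<n. q i)" by (intro sum_mono) auto
  then show False using t assms by simp
qed

lemma hermite_degree_le_deg_bound:
  assumes "(\<Sum>i<n. q i) + 2 \<le> k"
  shows "Suc m * (\<Sum>i<n. q i) + m * n \<le> deg_bound n m k"
proof -
  have "Suc m * ((\<Sum>i<n. q i) + 1) \<le> Suc m * (k - 1)"
    using assms by (intro mult_le_mono2) simp
  then show ?thesis unfolding deg_bound_def by simp
qed

lemma hermite_tensor_in_reduced_space:
  assumes "c \<in> grid_pts n m" "(\<Sum>i<n. q i) + 2 \<le> k"
  shows "hermite_tensor n m q c \<in> reduced_space n m k"
  unfolding reduced_space_def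
proof (intro CollectI allI impI conjI)
  fix \<alpha> assume \<alpha>: "hermite_tensor n m q c \<alpha> \<noteq> 0"
  show "\<alpha> \<in> expset n (deg_bound n m k)"
    using hermite_tensor_in_expset[OF assms(1) \<alpha>] expset_mono[OF hermite_degree_le_deg_bound[OF assms(2)]]
    by blast
  show "\<not> mono_divisible n m k \<alpha>"
    by (rule not_mono_divisible_if_le) (use hermite_tensor_neq_0D[OF assms(1) \<alpha>] assms(2) in auto)
qed

text \<open>For |q| = k - 1 the hermite tensor itself has degree deg_bound + 1, but all hermite
  tensors of the same q share their top coefficient, which therefore cancels in differences.\<close>
lemma hermite_tensor_diff_in_reduced_space:
  assumes c: "c \<in> grid_pts n m" and c': "c' \<in> grid_pts n m" and k: "(\<Sum>i<n. q i) + 1 = k"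
  shows "(\<lambda>\<alpha>. hermite_tensor n m q c \<alpha> - hermite_tensor n m q c' \<alpha>) \<in> reduced_space n m k"
  unfolding reduced_space_def
proof (intro CollectI allI impI conjI)
  fix \<alpha> assume \<alpha>: "hermite_tensor n m q c \<alpha> - hermite_tensor n m q c' \<alpha> \<noteq> 0"
  then have "hermite_tensor n m q c \<alpha> \<noteq> 0 \<or> hermite_tensor n m q c' \<alpha> \<noteq> 0"
    by auto
  then have bounds: "(\<forall>i\<ge>n. \<alpha> i = 0) \<and> (\<forall>i<n. \<alpha> i \<le> Suc m * q i + m)"
    using hermite_tensor_neq_0D[OF c] hermite_tensor_neq_0D[OF c'] by blast
  have "\<exists>i<n. \<alpha> i < Suc m * q i + m"
  proof (rule ccontr)
    assume "\<not> ?thesis"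
    then have "\<forall>i<n. \<alpha> i = Suc m * q i + m" using bounds by (meson le_neq_implies_less)
    then show False using \<alpha> hermite_tensor_top_coeff[OF c] hermite_tensor_top_coeff[OF c'] bounds by simp
  qed
  then have "(\<Sum>i<n. \<alpha> i) < (\<Sum>i<n. Suc m * q i + m)"
    using bounds by (intro sum_strict_mono_ex1) auto
  also have "\<dots> = m * n + Suc m * (k - 1)"
    unfolding k[symmetric] by (simp add: sum.distrib sum_distrib_left)
  finally have "(\<Sum>i<n. \<alpha> i) \<le> deg_bound n m k"
    unfolding deg_bound_def by simp
  then show "\<alpha> \<in> expset n (deg_bound n m k)"
    using bounds by (simp add: expset_def)
  show "\<not> mono_divisible n m k \<alpha>"
    by (rule not_mono_divisible_if_le) (use bounds k in auto)
qed

instantiation "fun" :: (type, real_vector) real_vector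
begin

definition scaleR_fun :: "real \<Rightarrow> ('a \<Rightarrow> 'b) \<Rightarrow> 'a \<Rightarrow> 'b" where
  "scaleR_fun r f = (\<lambda>x. r *\<^sub>R f x)"

instance by standard (auto simp: scaleR_fun_def fun_eq_iff algebra_simps)

end

lemma scaleR_fun_apply [simp]: "(r *\<^sub>R f) x = r *\<^sub>R f x"
  by (simp add: scaleR_fun_def)

lemma sum_fun_apply: "(\<Sum>x\<in>A. g x) y = (\<Sum>x\<in>A. g x y)"
  by (induction A rule: infinite_finite_induct) auto

lemma fun_eq_sum_indicator:
  fixes f :: "'a \<Rightarrow> real"
  assumes "finite A" "\<And>p. p \<notin> A \<Longrightarrow> f p = 0"
  shows "f = (\<Sum>p\<in>A. f p *\<^sub>R indicator {p})"
proof
  fix x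
  show "f x = (\<Sum>p\<in>A. f p *\<^sub>R indicator {p}) x"
    unfolding sum_fun_apply using assms
    by (cases "x \<in> A") (auto simp: indicator_def if_distrib sum.delta cong: if_cong)
qed

lemma mem_subspace_if_indicators:
  fixes f :: "'a \<Rightarrow> real"
  assumes "subspace W" "finite A" "\<And>p. p \<in> A \<Longrightarrow> indicator {p} \<in> W" "\<And>p. p \<notin> A \<Longrightarrow> f p = 0"
  shows "f \<in> W"
proof -
  have "f = (\<Sum>p\<in>A. f p *\<^sub>R indicator {p})"
    by (rule fun_eq_sum_indicator[OF assms(2,4)])
  also have "\<dots> \<in> W"
    using assms(1,3) by (intro subspace_sum subspace_scale) auto
  finally show ?thesis .
qed

lemma inj_indicator_singleton: "inj (\<lambda>p. indicator {p} :: 'a \<Rightarrow> real)"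
proof (rule injI)
  fix p q :: 'a
  assume "indicator {p} = (indicator {q} :: 'a \<Rightarrow> real)"
  then have "indicator {p} p = (indicator {q} p :: real)" by simp
  then show "p = q" by (simp add: indicator_def split: if_splits)
qed

lemma independent_indicator_singletons:
  assumes "finite A"
  shows "independent ((\<lambda>p. indicator {p} :: 'a \<Rightarrow> real) ` A)"
proof
  let ?e = "\<lambda>p. indicator {p} :: 'a \<Rightarrow> real"
  assume "dependent (?e ` A)"
  then obtain u where u: "\<exists>v\<in>?e ` A. u v \<noteq> 0" "(\<Sum>v\<in>?e ` A. u v *\<^sub>R v) = 0"
    unfolding real_vector.dependent_finite[OF finite_imageI[OF assms]] by blast
  then obtain p where p: "p \<in> A" "u (?e p) \<noteq> 0" by blast
  have "0 = (\<Sum>v\<in>?e ` A. u v *\<^sub>R v) p" using u(2) by simp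
  also have "\<dots> = (\<Sum>q\<in>A. u (?e q) * ?e q p)"
    unfolding sum_fun_apply
    by (subst sum.reindex) (auto intro: inj_on_subset[OF inj_indicator_singleton])
  also have "\<dots> = (\<Sum>q\<in>A. if q = p then u (?e q) else 0)"
    by (intro sum.cong) (auto simp: indicator_def)
  also have "\<dots> = u (?e p)"
    using p assms by simp
  finally show False using p by simp
qed

lemma linear_inj_on_if_card_le:
  assumes f: "linear f" and V: "subspace V" "V \<subseteq> span A" "finite A"
    and C: "independent C" "C \<subseteq> f ` V" "card A \<le> card C"
  shows "inj_on f V"
proof -
  have "c = 0" if c: "c \<in> V" "f c = 0" for c
  proof (rule ccontr)
    assume "c \<noteq> 0"
    then have "independent {c}"
      by (simp add: real_vector.independent_insert real_vector.independent_empty)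
    then obtain B where B: "{c} \<subseteq> B" "B \<subseteq> V" "independent B" "V \<subseteq> span B"
      using real_vector.maximal_independent_subset_extend[of "{c}" V] c(1) by blast
    have "B \<subseteq> span A" using B(2) V(2) by blast
    then have B_bound: "finite B" "card B \<le> card A"
      using real_vector.independent_span_bound[OF V(3) B(3)] by simp_all
    have "C \<subseteq> f ` span B" using C(2) B(4) by blast
    also have "\<dots> = span (f ` B)" by (rule real_vector.linear_span_image[OF f, symmetric])
    also have "\<dots> \<subseteq> span (insert 0 (f ` (B - {c})))"
      by (rule real_vector.span_mono) (use c(2) in blast)
    also have "\<dots> = span (f ` (B - {c}))" by (rule real_vector.span_insert_0)
    finally have "card C \<le> card (f ` (B - {c}))"
      using real_vector.independent_span_bound[OF _ C(1)] B_bound(1) by simp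
    also have "\<dots> \<le> card (B - {c})" by (rule card_image_le) (use B_bound in simp)
    also have "\<dots> < card B" using B(1) by (intro card_Diff1_less B_bound(1)) simp
    finally show False using B_bound C(3) by linarith
  qed
  then show ?thesis using real_vector.linear_inj_on_iff_eq_0[OF f V(1)] by blast
qed

section \<open>Surjectivity of psi\<close>

lemma mem_psi_index_iff:
  assumes "k \<ge> 1"
  shows "(b, j) \<in> psi_index n m k \<longleftrightarrow>
    b \<in> grid_pts n m \<and> (\<forall>i\<ge>n. j i = 0) \<and> (\<Sum>i<n. j i) < k \<and>
    (b = (\<lambda>_. 0) \<longrightarrow> (\<Sum>i<n. j i) + 1 < k)"
  using assms by (auto simp: psi_index_def midx_def zero_in_grid_pts)

lemma finite_psi_index: "finite (psi_index n m k)"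
proof -
  have "psi_index n m k \<subseteq> grid_pts n m \<times> (midx n k \<union> midx n (k - 1))"
    by (auto simp: psi_index_def zero_in_grid_pts)
  then show ?thesis
    by (rule finite_subset)
      (simp add: grid_pts_eq_coord_box finite_coord_box finite_midx)
qed

lemma psi_eq_deriv_at:
  "(b, j) \<in> psi_index n m k \<Longrightarrow>
    psi n m k c (b, j) = deriv_at n (deg_bound n m k) c j (\<lambda>i. real (b i))"
  by (simp add: psi_def)

lemma psi_eq_0: "p \<notin> psi_index n m k \<Longrightarrow> psi n m k c p = 0"
  by (cases p) (simp add: psi_def)

lemma psi_linear_combination:
  "psi n m k (\<lambda>\<alpha>. a * c \<alpha> + b * d \<alpha>) = (\<lambda>p. a * psi n m k c p + b * psi n m k d p)"
  by (rule ext, case_tac p) (simp add: psi_def deriv_at_linear_combination)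

lemma linear_psi: "linear (psi n m k)"
  by (rule linearI)
    (use psi_linear_combination[of n m k 1 _ 1] psi_linear_combination[of n m k _ _ 0] in
      \<open>auto simp: plus_fun_def scaleR_fun_def\<close>)

lemma subspace_reduced_space: "subspace (reduced_space n m k)"
  unfolding subspace_def reduced_space_def
  by (auto simp: plus_fun_def scaleR_fun_def) (metis add.right_neutral)+

lemma subspace_psi_image: "subspace (psi n m k ` reduced_space n m k)"
  by (rule real_vector.linear_subspace_image[OF linear_psi subspace_reduced_space])

lemma psi_hermite_tensor:
  assumes k: "(\<Sum>i<n. q i) + 2 \<le> k" and c: "c \<in> grid_pts n m" and q: "\<forall>i\<ge>n. q i = 0"
    and bj: "(b, j) \<in> psi_index n m k" and le: "(\<Sum>i<n. j i) \<le> (\<Sum>i<n. q i)"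
  shows "psi n m k (hermite_tensor n m q c) (b, j) =
    (if j = q \<and> b = c then hermite_weight n m q b else 0)"
proof -
  have b: "b \<in> grid_pts n m" and j: "\<forall>i\<ge>n. j i = 0"
    using bj k by (auto simp: mem_psi_index_iff)
  show ?thesis
    unfolding psi_eq_deriv_at[OF bj]
    by (rule deriv_at_hermite_tensor[OF b c j q le hermite_degree_le_deg_bound[OF k]])
qed

lemma psi_hermite_tensor_diff:
  assumes k: "(\<Sum>i<n. q i) + 1 = k" and c: "c \<in> grid_pts n m" and q: "\<forall>i\<ge>n. q i = 0"
    and cq: "(c, q) \<in> psi_index n m k"
  shows "psi n m k (\<lambda>\<alpha>. hermite_tensor n m q c \<alpha> - hermite_tensor n m q (\<lambda>_. 0) \<alpha>) =
    hermite_weight n m q c *\<^sub>R indicator {(c, q)}"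
proof
  fix p :: "(nat \<Rightarrow> nat) \<times> (nat \<Rightarrow> nat)"
  let ?e = "\<lambda>\<alpha>. hermite_tensor n m q c \<alpha> - hermite_tensor n m q (\<lambda>_. 0) \<alpha>"
  show "psi n m k ?e p = (hermite_weight n m q c *\<^sub>R indicator {(c, q)}) p"
  proof (cases "p \<in> psi_index n m k")
    case False
    then show ?thesis using cq by (auto simp: psi_eq_0 indicator_def)
  next
    case True
    obtain b j where p: "p = (b, j)" by fastforce
    let ?D = "Suc m * (\<Sum>i<n. q i) + m * n"
    have b: "b \<in> grid_pts n m" and j: "\<forall>i\<ge>n. j i = 0" "(\<Sum>i<n. j i) \<le> (\<Sum>i<n. q i)"
      and b0: "b = (\<lambda>_. 0) \<Longrightarrow> j \<noteq> q"
      using True k mem_psi_index_iff[of k b j n m] by (auto simp: p)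
    have "deg_bound n m k \<le> ?D"
      unfolding deg_bound_def k[symmetric] by simp
    then have "psi n m k ?e p =
        deriv_at n ?D (hermite_tensor n m q c) j (\<lambda>i. real (b i)) -
        deriv_at n ?D (hermite_tensor n m q (\<lambda>_. 0)) j (\<lambda>i. real (b i))"
      unfolding p psi_eq_deriv_at[OF True[unfolded p]] deriv_at_diff[symmetric]
      using hermite_tensor_diff_in_reduced_space[OF c zero_in_grid_pts k]
      by (intro deriv_at_eq_if_support) (auto simp: reduced_space_def)
    also have "\<dots> = (hermite_weight n m q c *\<^sub>R indicator {(c, q)}) p"
      using b0 by (auto simp: p indicator_def deriv_at_hermite_tensor[OF b c j(1) q j(2)]
          deriv_at_hermite_tensor[OF b zero_in_grid_pts j(1) q j(2)])
    finally show ?thesis .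
  qed
qed

lemma indicator_in_psi_image_step:
  assumes k: "k \<ge> 2" and bj: "(b, j) \<in> psi_index n m k"
    and higher: "\<And>p. p \<in> psi_index n m k \<Longrightarrow> (\<Sum>i<n. j i) < (\<Sum>i<n. snd p i) \<Longrightarrow>
      indicator {p} \<in> psi n m k ` reduced_space n m k"
  shows "indicator {(b, j)} \<in> psi n m k ` reduced_space n m k"
proof -
  let ?T = "psi_index n m k" and ?W = "psi n m k ` reduced_space n m k"
  let ?w = "hermite_weight n m j b"
  have b: "b \<in> grid_pts n m" and j: "\<forall>i\<ge>n. j i = 0" "(\<Sum>i<n. j i) < k"
    using bj k by (auto simp: mem_psi_index_iff)
  have "?w \<noteq> 0" by (rule hermite_weight_neq_0)
  then have scaled: "indicator {(b, j)} \<in> ?W" if "?w *\<^sub>R indicator {(b, j)} \<in> ?W"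
    using subspace_scale[OF subspace_psi_image that, of "1 / ?w"] by simp
  consider "(\<Sum>i<n. j i) + 1 = k" | "(\<Sum>i<n. j i) + 2 \<le> k" using j(2) by linarith
  then show ?thesis
  proof cases
    case 1
    have "?w *\<^sub>R indicator {(b, j)} =
        psi n m k (\<lambda>\<alpha>. hermite_tensor n m j b \<alpha> - hermite_tensor n m j (\<lambda>_. 0) \<alpha>)"
      using psi_hermite_tensor_diff[OF 1 b j(1) bj] by simp
    also have "\<dots> \<in> ?W"
      using hermite_tensor_diff_in_reduced_space[OF b zero_in_grid_pts 1] by blast
    finally show ?thesis by (rule scaled)
  next
    case 2
    let ?e = "hermite_tensor n m j b" and ?A = "{p \<in> ?T. (\<Sum>i<n. j i) < (\<Sum>i<n. snd p i)}"
    have "psi n m k ?e - ?w *\<^sub>R indicator {(b, j)} \<in> ?W"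
    proof (rule mem_subspace_if_indicators[OF subspace_psi_image, of ?A])
      show "finite ?A" using finite_psi_index by simp
      show "indicator {p} \<in> ?W" if "p \<in> ?A" for p
        using that higher by blast
      show "(psi n m k ?e - ?w *\<^sub>R indicator {(b, j)}) p = 0" if "p \<notin> ?A" for p
      proof (cases "p \<in> ?T")
        case True
        obtain b' j' where p: "p = (b', j')" by fastforce
        have "(\<Sum>i<n. j' i) \<le> (\<Sum>i<n. j i)" using that True by (auto simp: p)
        then show ?thesis
          using psi_hermite_tensor[OF 2 b j(1) True[unfolded p]] by (auto simp: p indicator_def)
      next
        case False
        then show ?thesis using bj by (auto simp: psi_eq_0 indicator_def)
      qed
    qed
    moreover have "psi n m k ?e \<in> ?W"
      using hermite_tensor_in_reduced_space[OF b 2] by blast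
    ultimately have "psi n m k ?e - (psi n m k ?e - ?w *\<^sub>R indicator {(b, j)}) \<in> ?W"
      by (rule subspace_diff[OF subspace_psi_image, rotated])
    then show ?thesis by (intro scaled) simp
  qed
qed

lemma indicator_in_psi_image:
  assumes k: "k \<ge> 2" and p: "p \<in> psi_index n m k"
  shows "indicator {p} \<in> psi n m k ` reduced_space n m k"
proof -
  have "indicator {p} \<in> psi n m k ` reduced_space n m k"
    if "p \<in> psi_index n m k" "k - (\<Sum>i<n. snd p i) = d" for p d
    using that
  proof (induction d arbitrary: p rule: less_induct)
    case (less d)
    obtain b j where p: "p = (b, j)" by fastforce
    have "indicator {(b, j)} \<in> psi n m k ` reduced_space n m k"
    proof (rule indicator_in_psi_image_step[OF k])
      show "(b, j) \<in> psi_index n m k" using less.prems(1) by (simp add: p)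
      show "indicator {p'} \<in> psi n m k ` reduced_space n m k"
        if "p' \<in> psi_index n m k" "(\<Sum>i<n. j i) < (\<Sum>i<n. snd p' i)" for p'
      proof -
        have "(\<Sum>i<n. snd p' i) < k" using that(1) k by (cases p') (auto simp: mem_psi_index_iff)
        then show ?thesis
          using that(2) less.prems(2) by (intro less.IH[OF _ that(1) refl]) (auto simp: p)
      qed
    qed
    then show ?case by (simp add: p)
  qed
  then show ?thesis using p by blast
qed

lemma psi_image_eq:
  assumes "k \<ge> 2"
  shows "psi n m k ` reduced_space n m k = {f. \<forall>p. p \<notin> psi_index n m k \<longrightarrow> f p = 0}"
proof
  show "psi n m k ` reduced_space n m k \<subseteq> {f. \<forall>p. p \<notin> psi_index n m k \<longrightarrow> f p = 0}"
    by (auto simp: psi_eq_0)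
  show "{f. \<forall>p. p \<notin> psi_index n m k \<longrightarrow> f p = 0} \<subseteq> psi n m k ` reduced_space n m k"
    using mem_subspace_if_indicators[OF subspace_psi_image finite_psi_index]
      indicator_in_psi_image[OF assms] by blast
qed

section \<open>Injectivity of psi by counting monomials\<close>

definition reduced_exponents :: "nat \<Rightarrow> nat \<Rightarrow> nat \<Rightarrow> (nat \<Rightarrow> nat) set" where
  "reduced_exponents n m k = {\<alpha> \<in> expset n (deg_bound n m k). \<not> mono_divisible n m k \<alpha>}"

lemma finite_reduced_exponents: "finite (reduced_exponents n m k)"
  unfolding reduced_exponents_def using finite_expset by simp

lemma reduced_space_subset_span:
  "reduced_space n m k \<subseteq> span ((\<lambda>\<alpha>. indicator {\<alpha>}) ` reduced_exponents n m k)"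
proof
  fix c assume c: "c \<in> reduced_space n m k"
  have "c = (\<Sum>\<alpha>\<in>reduced_exponents n m k. c \<alpha> *\<^sub>R indicator {\<alpha>})"
    by (rule fun_eq_sum_indicator[OF finite_reduced_exponents])
      (use c in \<open>auto simp: reduced_exponents_def reduced_space_def\<close>)
  also have "\<dots> \<in> span ((\<lambda>\<alpha>. indicator {\<alpha>}) ` reduced_exponents n m k)"
    by (intro real_vector.span_sum real_vector.span_scale real_vector.span_base) auto
  finally show "c \<in> span ((\<lambda>\<alpha>. indicator {\<alpha>}) ` reduced_exponents n m k)" .
qed

lemma exists_le_sum_eq:
  fixes q :: "nat \<Rightarrow> nat"
  assumes "k \<le> (\<Sum>i<n. q i)"
  shows "\<exists>t. (\<Sum>i<n. t i) = k \<and> (\<forall>i<n. t i \<le> q i)"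
  using assms
proof (induction n arbitrary: k)
  case 0
  then show ?case by auto
next
  case (Suc n)
  define k' where "k' = min k (\<Sum>i<n. q i)"
  obtain t where t: "(\<Sum>i<n. t i) = k'" "\<forall>i<n. t i \<le> q i"
    using Suc.IH[of k'] by (auto simp: k'_def)
  have "(\<Sum>i<n. (t(n := k - k')) i) = k'"
    using t(1) by (metis (no_types, lifting) fun_upd_other lessThan_iff less_irrefl sum.cong)
  then have "(\<Sum>i<Suc n. (t(n := k - k')) i) = k"
    by (simp add: k'_def)
  moreover have "\<forall>i<Suc n. (t(n := k - k')) i \<le> q i"
    using t(2) Suc.prems by (auto simp: k'_def less_Suc_eq)
  ultimately show ?case by blast
qed

lemma sum_div_less_if_not_mono_divisible:
  assumes "\<not> mono_divisible n m k \<alpha>"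
  shows "(\<Sum>i<n. \<alpha> i div Suc m) < k"
proof (rule ccontr)
  assume "\<not> ?thesis"
  then have "k \<le> (\<Sum>i<n. \<alpha> i div Suc m)" by simp
  from exists_le_sum_eq[OF this] obtain t
    where t: "(\<Sum>i<n. t i) = k" "\<forall>i<n. t i \<le> \<alpha> i div Suc m" by blast
  have "(m + 1) * t i \<le> \<alpha> i" if "i < n" for i
  proof -
    have "Suc m * t i \<le> Suc m * (\<alpha> i div Suc m)"
      using t(2) that by (intro mult_le_mono2) simp
    also have "\<dots> \<le> \<alpha> i" by (rule times_div_less_eq_dividend)
    finally show ?thesis by simp
  qed
  then have "mono_divisible n m k \<alpha>"
    using t(1) by (auto simp: mono_divisible_def)
  with assms show False by simp
qed

definition exponent_index :: "nat \<Rightarrow> nat \<Rightarrow> (nat \<Rightarrow> nat) \<Rightarrow> (nat \<Rightarrow> nat) \<times> (nat \<Rightarrow> nat)" where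
  "exponent_index n m \<alpha> =
     ((\<lambda>i. if i < n then m - \<alpha> i mod Suc m else 0), (\<lambda>i. if i < n then \<alpha> i div Suc m else 0))"

lemma exponent_index_in_psi_index:
  assumes k: "k \<ge> 2" and \<alpha>: "\<alpha> \<in> reduced_exponents n m k"
  shows "exponent_index n m \<alpha> \<in> psi_index n m k"
proof -
  define b where "b = (\<lambda>i. if i < n then m - \<alpha> i mod Suc m else 0)"
  define j where "j = (\<lambda>i. if i < n then \<alpha> i div Suc m else 0)"
  have \<alpha>_expset: "\<alpha> \<in> expset n (deg_bound n m k)" and \<alpha>_nd: "\<not> mono_divisible n m k \<alpha>"
    using \<alpha> by (auto simp: reduced_exponents_def)
  have mod_le: "\<alpha> i mod Suc m \<le> m" for i
    using mod_less_divisor[of "Suc m" "\<alpha> i"] by linarith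
  have \<alpha>_eq: "\<alpha> i = Suc m * j i + (m - b i)" if "i < n" for i
    using that mod_le[of i] div_mult_mod_eq[of "\<alpha> i" "Suc m"]
    by (simp add: b_def j_def mult.commute)
  have "(\<Sum>i<n. j i) = (\<Sum>i<n. \<alpha> i div Suc m)"
    by (simp add: j_def)
  then have j_less: "(\<Sum>i<n. j i) < k"
    using sum_div_less_if_not_mono_divisible[OF \<alpha>_nd] by simp
  have "(\<Sum>i<n. j i) + 1 < k" if b0: "b = (\<lambda>_. 0)"
  proof -
    have "Suc m * (\<Sum>i<n. j i) + m * n = (\<Sum>i<n. Suc m * j i + m)"
      by (simp add: sum.distrib sum_distrib_left)
    also have "\<dots> = (\<Sum>i<n. \<alpha> i)"
      using \<alpha>_eq b0 by (intro sum.cong) auto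
    also have "\<dots> \<le> deg_bound n m k"
      using \<alpha>_expset by (simp add: expset_def)
    also have "\<dots> < m * n + Suc m * (k - 1)"
      using k by (simp add: deg_bound_def)
    finally have "Suc m * (\<Sum>i<n. j i) < Suc m * (k - 1)" by linarith
    then show ?thesis by (subst (asm) mult_less_cancel1) linarith
  qed
  moreover have "b \<in> grid_pts n m" "\<forall>i\<ge>n. j i = 0"
    by (auto simp: b_def j_def grid_pts_def)
  ultimately show ?thesis
    using j_less k by (simp add: exponent_index_def mem_psi_index_iff flip: b_def j_def)
qed

lemma inj_on_exponent_index: "inj_on (exponent_index n m) (reduced_exponents n m k)"
proof (rule inj_onI)
  fix \<alpha> \<beta>
  assume \<alpha>: "\<alpha> \<in> reduced_exponents n m k" and \<beta>: "\<beta> \<in> reduced_exponents n m k"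
    and eq: "exponent_index n m \<alpha> = exponent_index n m \<beta>"
  show "\<alpha> = \<beta>"
  proof
    fix i
    show "\<alpha> i = \<beta> i"
    proof (cases "i < n")
      case True
      have "fst (exponent_index n m \<alpha>) i = fst (exponent_index n m \<beta>) i"
        "snd (exponent_index n m \<alpha>) i = snd (exponent_index n m \<beta>) i"
        using eq by simp_all
      then have "\<alpha> i div Suc m = \<beta> i div Suc m" "m - \<alpha> i mod Suc m = m - \<beta> i mod Suc m"
        using True by (simp_all add: exponent_index_def)
      moreover have "\<alpha> i mod Suc m \<le> m" "\<beta> i mod Suc m \<le> m"
        using mod_less_divisor[of "Suc m"] by (metis less_Suc_eq_le zero_less_Suc)+
      ultimately show ?thesis by (metis diff_diff_cancel div_mult_mod_eq)
    next
      case False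
      then show ?thesis using \<alpha> \<beta> by (auto simp: reduced_exponents_def expset_def)
    qed
  qed
qed

lemma card_reduced_exponents_le:
  "k \<ge> 2 \<Longrightarrow> card (reduced_exponents n m k) \<le> card (psi_index n m k)"
  by (rule card_inj_on_le[OF inj_on_exponent_index])
    (auto intro: exponent_index_in_psi_index finite_psi_index)

lemma inj_on_psi:
  assumes k: "k \<ge> 2"
  shows "inj_on (psi n m k) (reduced_space n m k)"
proof (rule linear_inj_on_if_card_le[OF linear_psi subspace_reduced_space reduced_space_subset_span])
  show "finite ((\<lambda>\<alpha>. indicator {\<alpha>} :: _ \<Rightarrow> real) ` reduced_exponents n m k)"
    using finite_reduced_exponents by simp
  show "independent ((\<lambda>p. indicator {p} :: _ \<Rightarrow> real) ` psi_index n m k)"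
    by (rule independent_indicator_singletons[OF finite_psi_index])
  show "(\<lambda>p. indicator {p} :: _ \<Rightarrow> real) ` psi_index n m k \<subseteq> psi n m k ` reduced_space n m k"
    unfolding psi_image_eq[OF k] by (auto simp: indicator_def)
  have "card ((\<lambda>\<alpha>. indicator {\<alpha>} :: _ \<Rightarrow> real) ` reduced_exponents n m k) \<le> card (reduced_exponents n m k)"
    by (rule card_image_le[OF finite_reduced_exponents])
  also have "\<dots> \<le> card (psi_index n m k)"
    by (rule card_reduced_exponents_le[OF k])
  also have "\<dots> = card ((\<lambda>p. indicator {p} :: _ \<Rightarrow> real) ` psi_index n m k)"
    by (rule card_image[symmetric], rule inj_on_subset[OF inj_indicator_singleton]) simp
  finally show "card ((\<lambda>\<alpha>. indicator {\<alpha>} :: _ \<Rightarrow> real) ` reduced_exponents n m k)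
      \<le> card ((\<lambda>p. indicator {p} :: _ \<Rightarrow> real) ` psi_index n m k)" .
qed

section \<open>Counting the index set\<close>

lemma bij_betw_midx_lists:
  "bij_betw (\<lambda>j. map j [0..<n] @ [e - (\<Sum>i<n. j i)])
     (midx n (Suc e)) {l. length l = Suc n \<and> sum_list l = e}"
  (is "bij_betw ?f _ ?L")
proof (rule bij_betwI[where g = "\<lambda>l i. if i < n then l ! i else 0"])
  let ?g = "\<lambda>l i. if i < n then l ! i else 0"
  have sum_list_map: "sum_list (map j [0..<n]) = (\<Sum>i<n. j i)" for j :: "nat \<Rightarrow> nat"
    by (simp add: sum_set_upt_conv_sum_list_nat[symmetric] atLeast0LessThan)
  have sum_last: "(\<Sum>i<n. l ! i) + l ! n = e" if "l \<in> ?L" for l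
    using that by (auto simp: sum_list_sum_nth atLeast0LessThan)
  show "?f \<in> midx n (Suc e) \<rightarrow> ?L"
    by (auto simp: midx_def sum_list_map)
  show "?g \<in> ?L \<rightarrow> midx n (Suc e)"
    using sum_last by (fastforce simp: midx_def)
  show "?g (?f j) = j" if "j \<in> midx n (Suc e)" for j
    using that by (auto simp: midx_def nth_append fun_eq_iff)
  show "?f (?g l) = l" if "l \<in> ?L" for l
  proof (rule nth_equalityI)
    show "length (?f (?g l)) = length l" using that by simp
    show "?f (?g l) ! i = l ! i" if "i < length (?f (?g l))" for i
      using that \<open>l \<in> ?L\<close> sum_last[OF \<open>l \<in> ?L\<close>] by (auto simp: nth_append less_Suc_eq)
  qed
qed

lemma card_midx: "card (midx n (Suc e)) = (n + e) choose n"
  using bij_betw_same_card[OF bij_betw_midx_lists] card_length_sum_list[of "Suc n" e]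
    binomial_symmetric[of e "n + e"]
  by (simp add: add.commute)

lemma card_psi_index:
  assumes "k \<ge> 2"
  shows "card (psi_index n m k) = bigN n m k"
proof -
  let ?A = "(grid_pts n m - {\<lambda>_. 0}) \<times> midx n k"
    and ?B = "{\<lambda>_::nat. 0::nat} \<times> midx n (k - 1)"
  have fin: "finite (grid_pts n m)" "card (grid_pts n m) = (m + 1) ^ n"
    by (simp_all add: grid_pts_eq_coord_box finite_coord_box card_coord_box)
  have "card (psi_index n m k) = card (?A \<union> ?B)"
    by (rule arg_cong[where f = card]) (auto simp: psi_index_def)
  also have "\<dots> = card ?A + card ?B"
    by (rule card_Un_disjoint) (use fin finite_midx in auto)
  also have "\<dots> = ((m + 1) ^ n - 1) * card (midx n k) + card (midx n (k - 1))"
    using fin zero_in_grid_pts by (simp add: card_cartesian_product card_Diff_singleton)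
  also have "\<dots> = bigN n m k"
  proof -
    define e where "e = k - 2"
    have k: "k = Suc (Suc e)" using assms by (simp add: e_def)
    show ?thesis
      unfolding k using card_midx[of n "Suc e"] card_midx[of n e] by (simp add: bigN_def Mk_def)
  qed
  finally show ?thesis .
qed

theorem lemma3p3:
  fixes n m k :: nat
  assumes "m \<ge> 1" and "n \<ge> 1" and "k \<ge> 2"
  shows "card (psi_index n m k) = bigN n m k
    \<and> (\<forall>c\<in>reduced_space n m k. \<forall>d\<in>reduced_space n m k. \<forall>a b :: real.
          psi n m k (\<lambda>\<alpha>. a * c \<alpha> + b * d \<alpha>) = (\<lambda>p. a * psi n m k c p + b * psi n m k d p))
    \<and> bij_betw (psi n m k) (reduced_space n m k)
        {f. \<forall>p. p \<notin> psi_index n m k \<longrightarrow> f p = 0}"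
  using card_psi_index[OF assms(3)] psi_linear_combination
    inj_on_psi[OF assms(3)] psi_image_eq[OF assms(3)]
  by (simp add: bij_betw_def)

end
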